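(* Let $\Lambda$ be a strongly connected finite $k$-graph. Then $\Lambda$ is aperiodic if and only if $\operatorname{Per}\Lambda=\{0\}$.
   Context: A $k$-graph is a countable category $\Lambda$ with a functor $d:\Lambda\to\mathbb{N}^k$ such that whenever $d(\lambda)=m+n$ there are unique $\mu,\nu$ with $d(\mu)=m$, $d(\nu)=n$, $\lambda=\mu\nu$. $\Lambda^n=d^{-1}(n)$, $\Lambda^0$ = vertices, $r,s$ range and source. Standing convention: $\Lambda^{e_i}\neq\emptyset$ for each $i$. Finite: each $\Lambda^n$ finite; strongly connected: $v\Lambda w\neq\emptyset$ for all vertices. Infinite paths: degree-preserving functors $x:\Omega_k\to\Lambda$, where $\Omega_k=\{(m,n)\in\mathbb{N}^k\times\mathbb{N}^k:m\le n\}$ with $r(m,n)=(m,m)$, $s(m,n)=(n,n)$, $(m,n)(n,p)=(m,p)$, $d(m,n)=n-m$; $\Lambda^\infty$ their set; $\sigma^n(x)(p,q)=x(n+p,n+q)$; $Z(v)=\{x\in\Lambda^\infty:x(0,0)=v\}$. $\Lambda$ is aperiodic if for each $v\in\Lambda^0$ there is $x\in Z(v)$ with $\sigma^m(x)\neq\sigma^n(x)$ for all $m\neq n$ in $\mathbb{N}^k$. $\operatorname{Per}\Lambda=\{m-n:m,n\in\mathbb{N}^k,\ \sigma^m(x)=\sigma^n(x)\ \forall x\in\Lambda^\infty\}$. *)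

theory Defs
  imports "HOL-Library.Countable_Set"
begin

text \<open>A k-graph, presented as a one-sorted small category: a set of morphisms,
  range and source maps (whose values are the identity morphisms = vertices),
  composition (meaningful on composable pairs: src mu = rng nu), and a degree map
  into N^k, where N^k is rendered as 'k \<Rightarrow> nat for a finite index type 'k
  (so k = CARD('k)).\<close>

record ('a, 'k) kgraph =
  mor :: "'a set"
  rng :: "'a \<Rightarrow> 'a"
  src :: "'a \<Rightarrow> 'a"
  cmp :: "'a \<Rightarrow> 'a \<Rightarrow> 'a"
  deg :: "'a \<Rightarrow> 'k \<Rightarrow> nat"

definition vertices :: "('a, 'k) kgraph \<Rightarrow> 'a set" where
  "vertices G = {v \<in> mor G. rng G v = v \<and> src G v = v}"

definition k_graph :: "('a, 'k::finite) kgraph \<Rightarrow> bool" where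
  "k_graph G \<longleftrightarrow>
     countable (mor G)
   \<and> (\<forall>l\<in>mor G. rng G l \<in> vertices G \<and> src G l \<in> vertices G)
   \<and> (\<forall>l\<in>mor G. cmp G (rng G l) l = l \<and> cmp G l (src G l) = l)
   \<and> (\<forall>mu\<in>mor G. \<forall>nu\<in>mor G. src G mu = rng G nu \<longrightarrow>
        cmp G mu nu \<in> mor G \<and> rng G (cmp G mu nu) = rng G mu \<and> src G (cmp G mu nu) = src G nu)
   \<and> (\<forall>a\<in>mor G. \<forall>b\<in>mor G. \<forall>c\<in>mor G. src G a = rng G b \<longrightarrow> src G b = rng G c \<longrightarrow>
        cmp G (cmp G a b) c = cmp G a (cmp G b c))
   \<and> (\<forall>v\<in>vertices G. deg G v = (\<lambda>_. 0))
   \<and> (\<forall>mu\<in>mor G. \<forall>nu\<in>mor G. src G mu = rng G nu \<longrightarrow>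
        deg G (cmp G mu nu) = (\<lambda>i. deg G mu i + deg G nu i))
   \<and> (\<forall>l\<in>mor G. \<forall>m n. deg G l = (\<lambda>i. m i + n i) \<longrightarrow>
        (\<exists>!p. fst p \<in> mor G \<and> snd p \<in> mor G \<and> src G (fst p) = rng G (snd p)
              \<and> deg G (fst p) = m \<and> deg G (snd p) = n \<and> l = cmp G (fst p) (snd p)))"

definition unit_vec :: "'k \<Rightarrow> 'k \<Rightarrow> nat" where
  "unit_vec i = (\<lambda>j. if j = i then 1 else 0)"

definition edges_nonempty :: "('a, 'k) kgraph \<Rightarrow> bool" where
  "edges_nonempty G \<longleftrightarrow> (\<forall>i. \<exists>l\<in>mor G. deg G l = unit_vec i)"

definition finite_kgraph :: "('a, 'k) kgraph \<Rightarrow> bool" where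
  "finite_kgraph G \<longleftrightarrow> (\<forall>n. finite {l \<in> mor G. deg G l = n})"

definition strongly_connected :: "('a, 'k) kgraph \<Rightarrow> bool" where
  "strongly_connected G \<longleftrightarrow>
     (\<forall>v\<in>vertices G. \<forall>w\<in>vertices G. \<exists>l\<in>mor G. rng G l = v \<and> src G l = w)"

text \<open>Infinite paths: degree-preserving functors Omega_k \<rightarrow> Lambda, where a morphism
  (m,n) of Omega_k (m \<le> n pointwise) is a pair; values off Omega_k are fixed to
  undefined so that paths are compared by ordinary function equality.\<close>
definition is_inf_path ::
    "('a, 'k) kgraph \<Rightarrow> (('k \<Rightarrow> nat) \<times> ('k \<Rightarrow> nat) \<Rightarrow> 'a) \<Rightarrow> bool" where
  "is_inf_path G x \<longleftrightarrow>
     (\<forall>m n. m \<le> n \<longrightarrow> x (m, n) \<in> mor G \<and> deg G (x (m, n)) = (\<lambda>i. n i - m i)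
        \<and> rng G (x (m, n)) = x (m, m) \<and> src G (x (m, n)) = x (n, n))
   \<and> (\<forall>m n p. m \<le> n \<longrightarrow> n \<le> p \<longrightarrow> cmp G (x (m, n)) (x (n, p)) = x (m, p))
   \<and> (\<forall>m n. \<not> m \<le> n \<longrightarrow> x (m, n) = undefined)"

definition inf_paths :: "('a, 'k) kgraph \<Rightarrow> (('k \<Rightarrow> nat) \<times> ('k \<Rightarrow> nat) \<Rightarrow> 'a) set" where
  "inf_paths G = {x. is_inf_path G x}"

definition shift :: "('k \<Rightarrow> nat) \<Rightarrow> (('k \<Rightarrow> nat) \<times> ('k \<Rightarrow> nat) \<Rightarrow> 'a)
    \<Rightarrow> (('k \<Rightarrow> nat) \<times> ('k \<Rightarrow> nat) \<Rightarrow> 'a)" where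
  "shift n x = (\<lambda>(p, q). x (\<lambda>i. n i + p i, \<lambda>i. n i + q i))"

definition cyl :: "('a, 'k) kgraph \<Rightarrow> 'a \<Rightarrow> (('k \<Rightarrow> nat) \<times> ('k \<Rightarrow> nat) \<Rightarrow> 'a) set" where
  "cyl G v = {x \<in> inf_paths G. x (\<lambda>_. 0, \<lambda>_. 0) = v}"

definition aperiodic :: "('a, 'k) kgraph \<Rightarrow> bool" where
  "aperiodic G \<longleftrightarrow>
     (\<forall>v\<in>vertices G. \<exists>x\<in>cyl G v. \<forall>m n. m \<noteq> n \<longrightarrow> shift m x \<noteq> shift n x)"

definition Per :: "('a, 'k) kgraph \<Rightarrow> ('k \<Rightarrow> int) set" where
  "Per G = {(\<lambda>i. int (m i) - int (n i)) | m n.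
              \<forall>x\<in>inf_paths G. shift m x = shift n x}"

end

theory Submission
  imports Defs
begin

text \<open>If Per \<Lambda> = {0}, then for every pair m \<noteq> n some infinite path x has
  \<sigma>^m x \<noteq> \<sigma>^n x. Prepending to x a path from the source of any given finite
  path \<lambda> (strong connectivity) keeps this, and it is already forced by a finite initial
  segment, which extends \<lambda>. Enumerating the countably many pairs (m, n) and extending
  step by step from a vertex v yields a chain of finite paths whose limit is an infinite path
  in Z(v) separating every pair. Conversely an aperiodic path separates all pairs, so
  Per \<Lambda> = {0}.\<close>

lemma vertex_in_mor: "v \<in> vertices G \<Longrightarrow> v \<in> mor G"
  and rng_vertex: "v \<in> vertices G \<Longrightarrow> rng G v = v"
  and src_vertex: "v \<in> vertices G \<Longrightarrow> src G v = v"
  by (simp_all add: vertices_def)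

lemma shift_apply: "shift m y (p, q) = y (\<lambda>i. m i + p i, \<lambda>i. m i + q i)"
  by (simp add: shift_def)

lemma shift_commute: "shift a (shift b y) = shift b (shift a y)"
  unfolding shift_def by (auto simp: fun_eq_iff add_ac)

lemma shift_ne_if_shift_ne_shift:
  assumes "shift m (shift d y) \<noteq> shift n (shift d y)"
  shows "shift m y \<noteq> shift n y"
  using assms by (metis shift_commute)

lemma Per_trivial_imp_shift_ne:
  assumes "Per G = {(\<lambda>_. 0)}" and "m \<noteq> n"
  obtains x where "is_inf_path G x" and "shift m x \<noteq> shift n x"
proof -
  have "(\<lambda>i. int (m i) - int (n i)) \<noteq> (\<lambda>_. 0)"
    using assms(2) by (auto simp: fun_eq_iff)
  then have "(\<lambda>i. int (m i) - int (n i)) \<notin> Per G"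
    using assms(1) by blast
  then show thesis
    using that unfolding Per_def inf_paths_def by blast
qed

lemma Per_trivial_if_aperiodic:
  assumes "aperiodic G" and "vertices G \<noteq> {}"
  shows "Per G = {(\<lambda>_. 0)}"
proof
  obtain v where "v \<in> vertices G"
    using assms(2) by blast
  then obtain x where x: "x \<in> inf_paths G"
    and x_aperiodic: "\<And>m n. m \<noteq> n \<Longrightarrow> shift m x \<noteq> shift n x"
    using assms(1) unfolding aperiodic_def cyl_def by blast
  show "Per G \<subseteq> {(\<lambda>_. 0)}"
  proof
    fix d assume "d \<in> Per G"
    then obtain m n where d: "d = (\<lambda>i. int (m i) - int (n i))"
      and "\<forall>x\<in>inf_paths G. shift m x = shift n x"
      unfolding Per_def by blast
    then have "m = n"
      using x x_aperiodic by blast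
    then show "d \<in> {(\<lambda>_. 0)}"
      using d by simp
  qed
  show "{(\<lambda>_. 0)} \<subseteq> Per G"
    unfolding Per_def by force
qed

locale higher_rank_graph =
  fixes G :: "('a, 'k::finite) kgraph"
  assumes k_graph: "k_graph G"
begin

lemma rng_in_vertices: "l \<in> mor G \<Longrightarrow> rng G l \<in> vertices G"
  and src_in_vertices: "l \<in> mor G \<Longrightarrow> src G l \<in> vertices G"
  and cmp_rng_id: "l \<in> mor G \<Longrightarrow> cmp G (rng G l) l = l"
  and cmp_src_id: "l \<in> mor G \<Longrightarrow> cmp G l (src G l) = l"
  and deg_vertex: "v \<in> vertices G \<Longrightarrow> deg G v = (\<lambda>_. 0)"
  using k_graph unfolding k_graph_def by blast+

context
  fixes a b
  assumes a: "a \<in> mor G" and b: "b \<in> mor G" and ab: "src G a = rng G b"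
begin

lemma cmp_in_mor: "cmp G a b \<in> mor G"
  and rng_cmp: "rng G (cmp G a b) = rng G a"
  and src_cmp: "src G (cmp G a b) = src G b"
  and deg_cmp: "deg G (cmp G a b) = (\<lambda>i. deg G a i + deg G b i)"
  using k_graph a b ab unfolding k_graph_def by blast+

lemma cmp_assoc:
  "c \<in> mor G \<Longrightarrow> src G b = rng G c \<Longrightarrow> cmp G (cmp G a b) c = cmp G a (cmp G b c)"
  using k_graph a b ab unfolding k_graph_def by blast

end

lemma unique_factorisation:
  "l \<in> mor G \<Longrightarrow> deg G l = (\<lambda>i. m i + n i) \<Longrightarrow>
   \<exists>!p. fst p \<in> mor G \<and> snd p \<in> mor G \<and> src G (fst p) = rng G (snd p)
        \<and> deg G (fst p) = m \<and> deg G (snd p) = n \<and> l = cmp G (fst p) (snd p)"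
  using k_graph unfolding k_graph_def by blast

lemma cmp_eq_imp_factors_eq:
  assumes "a \<in> mor G" "b \<in> mor G" "a' \<in> mor G" "b' \<in> mor G"
    and "src G a = rng G b" "src G a' = rng G b'"
    and "deg G a = deg G a'" and "cmp G a b = cmp G a' b'"
  shows "a = a'" and "b = b'"
proof -
  have deg_ab: "deg G (cmp G a b) = (\<lambda>i. deg G a i + deg G b i)"
    using deg_cmp assms by blast
  moreover have "deg G (cmp G a b) = (\<lambda>i. deg G a' i + deg G b' i)"
    using deg_cmp[of a' b'] assms by simp
  ultimately have "deg G b = deg G b'"
    using assms(7) by (auto simp: fun_eq_iff)
  then have "(a, b) = (a', b')"
    using unique_factorisation[OF cmp_in_mor deg_ab] assms
    by (metis (mono_tags, lifting) fst_conv snd_conv)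
  then show "a = a'" and "b = b'" by simp_all
qed

text \<open>factor l m = (l(0, m), l(m, d(l))) in the paper's notation; it is unspecified
  unless m \<le> d(l).\<close>

definition factor :: "'a \<Rightarrow> ('k \<Rightarrow> nat) \<Rightarrow> 'a \<times> 'a" where
  "factor l m = (THE p. fst p \<in> mor G \<and> snd p \<in> mor G \<and> src G (fst p) = rng G (snd p)
     \<and> deg G (fst p) = m \<and> deg G (snd p) = (\<lambda>i. deg G l i - m i) \<and> l = cmp G (fst p) (snd p))"

lemma factor:
  assumes "l \<in> mor G" "m \<le> deg G l"
  shows "fst (factor l m) \<in> mor G" "snd (factor l m) \<in> mor G"
    "src G (fst (factor l m)) = rng G (snd (factor l m))"
    "deg G (fst (factor l m)) = m" "deg G (snd (factor l m)) = (\<lambda>i. deg G l i - m i)"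
    "cmp G (fst (factor l m)) (snd (factor l m)) = l"
proof -
  have "deg G l = (\<lambda>i. m i + (deg G l i - m i))"
    using assms(2) by (auto simp: le_fun_def)
  from theI'[OF unique_factorisation[OF assms(1) this]]
  show "fst (factor l m) \<in> mor G" "snd (factor l m) \<in> mor G"
    "src G (fst (factor l m)) = rng G (snd (factor l m))"
    "deg G (fst (factor l m)) = m" "deg G (snd (factor l m)) = (\<lambda>i. deg G l i - m i)"
    "cmp G (fst (factor l m)) (snd (factor l m)) = l"
    unfolding factor_def by simp_all
qed

lemma factor_cmp:
  assumes "a \<in> mor G" "b \<in> mor G" "src G a = rng G b"
  shows "factor (cmp G a b) (deg G a) = (a, b)"
proof -
  have "deg G (cmp G a b) = (\<lambda>i. deg G a i + deg G b i)"
    using assms by (rule deg_cmp)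
  then have "deg G a \<le> deg G (cmp G a b)"
    by (simp add: le_fun_def)
  note F = factor[OF cmp_in_mor[OF assms] this]
  have "fst (factor (cmp G a b) (deg G a)) = a" "snd (factor (cmp G a b) (deg G a)) = b"
    using cmp_eq_imp_factors_eq[OF F(1,2) assms(1,2) F(3) assms(3) F(4)] F(6) by simp_all
  then show ?thesis
    by (simp add: prod_eq_iff)
qed

lemma factor_deg: "l \<in> mor G \<Longrightarrow> factor l (deg G l) = (l, src G l)"
  using factor_cmp[of l "src G l"] cmp_src_id[of l] src_in_vertices[of l]
  by (simp add: vertex_in_mor rng_vertex)

lemma factor_zero: "l \<in> mor G \<Longrightarrow> factor l (\<lambda>_. 0) = (rng G l, l)"
  using factor_cmp[of "rng G l" l] cmp_rng_id[of l] rng_in_vertices[of l]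
  by (simp add: vertex_in_mor src_vertex deg_vertex)

definition is_prefix :: "'a \<Rightarrow> 'a \<Rightarrow> bool" where
  "is_prefix l l' \<longleftrightarrow> l' \<in> mor G \<and> deg G l \<le> deg G l' \<and> fst (factor l' (deg G l)) = l"

lemma is_prefix_factor:
  "l \<in> mor G \<Longrightarrow> m \<le> deg G l \<Longrightarrow> is_prefix (fst (factor l m)) l"
  using factor[of l m] by (simp add: is_prefix_def)

lemma is_prefix_refl: "l \<in> mor G \<Longrightarrow> is_prefix l l"
  using factor_deg by (simp add: is_prefix_def)

lemma is_prefix_cmp:
  assumes "a \<in> mor G" "b \<in> mor G" "src G a = rng G b"
  shows "is_prefix a (cmp G a b)"
  using factor_cmp[OF assms] deg_cmp[OF assms] cmp_in_mor[OF assms]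
  by (simp add: is_prefix_def le_fun_def)

lemma prefix_factor_cmp:
  assumes "l \<in> mor G" "b \<in> mor G" "src G l = rng G b" "m \<le> deg G l"
  shows "fst (factor (cmp G l b) m) = fst (factor l m)"
proof -
  define x y where "x = fst (factor l m)" and "y = snd (factor l m)"
  have xy: "x \<in> mor G" "y \<in> mor G" "src G x = rng G y" "deg G x = m" "cmp G x y = l"
    using factor[OF assms(1,4)] x_def y_def by simp_all
  have yb: "src G y = rng G b"
    using src_cmp[OF xy(1-3)] xy(5) assms(3) by simp
  have "cmp G l b = cmp G x (cmp G y b)"
    using cmp_assoc[OF xy(1-3) assms(2) yb] xy(5) by simp
  moreover have "factor (cmp G x (cmp G y b)) (deg G x) = (x, cmp G y b)"
    using factor_cmp[OF xy(1) cmp_in_mor[OF xy(2) assms(2) yb]] rng_cmp[OF xy(2) assms(2) yb] xy(3)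
    by simp
  ultimately show ?thesis
    using xy(4) x_def by simp
qed

lemma factor_of_is_prefix:
  assumes "is_prefix b c" "m \<le> deg G b"
  shows "fst (factor c m) = fst (factor b m)"
proof -
  have c: "c \<in> mor G" "deg G b \<le> deg G c" "fst (factor c (deg G b)) = b"
    using assms(1) by (auto simp: is_prefix_def)
  have "fst (factor c m) = fst (factor (cmp G b (snd (factor c (deg G b)))) m)"
    using factor(6)[OF c(1,2)] c(3) by simp
  also have "\<dots> = fst (factor b m)"
    using factor[OF c(1,2)] c(3) assms(2) by (intro prefix_factor_cmp) simp_all
  finally show ?thesis .
qed

lemma is_prefix_trans: "is_prefix a b \<Longrightarrow> is_prefix b c \<Longrightarrow> is_prefix a c"
  using factor_of_is_prefix[of b c "deg G a"] by (auto simp: is_prefix_def intro: order_trans)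

lemma is_prefix_between:
  "is_prefix a c \<Longrightarrow> is_prefix b c \<Longrightarrow> deg G a \<le> deg G b \<Longrightarrow> is_prefix a b"
  using factor_of_is_prefix[of b c "deg G a"] factor(1)[of c "deg G b"]
  by (auto simp: is_prefix_def)

lemma prefix_chain_factors:
  assumes chain: "\<And>m n. m \<le> n \<Longrightarrow> is_prefix (g m) (g n)" and long: "\<And>n. n \<le> deg G (g n)"
  shows "deg G (fst (factor (g n) n)) = n"
    and "m \<le> n \<Longrightarrow> is_prefix (fst (factor (g m) m)) (fst (factor (g n) n))"
proof -
  have g_mor: "g n \<in> mor G" for n
    using chain[of n n] by (simp add: is_prefix_def)
  show deg: "deg G (fst (factor (g n) n)) = n" for n
    using factor(4)[OF g_mor long] .
  show "is_prefix (fst (factor (g m) m)) (fst (factor (g n) n))" if "m \<le> n"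
    using is_prefix_between[OF is_prefix_trans[OF is_prefix_factor[OF g_mor long] chain[OF that]]
      is_prefix_factor[OF g_mor long]] deg that
    by simp
qed

context
  fixes y assumes y: "is_inf_path G y"
begin

lemma inf_path_mor: "m \<le> n \<Longrightarrow> y (m, n) \<in> mor G"
  and inf_path_deg: "m \<le> n \<Longrightarrow> deg G (y (m, n)) = (\<lambda>i. n i - m i)"
  and inf_path_rng: "m \<le> n \<Longrightarrow> rng G (y (m, n)) = y (m, m)"
  and inf_path_src: "m \<le> n \<Longrightarrow> src G (y (m, n)) = y (n, n)"
  and inf_path_cmp: "m \<le> n \<Longrightarrow> n \<le> p \<Longrightarrow> cmp G (y (m, n)) (y (n, p)) = y (m, p)"
  and inf_path_undefined: "\<not> m \<le> n \<Longrightarrow> y (m, n) = undefined"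
  using y unfolding is_inf_path_def by blast+

lemma factor_inf_path:
  assumes "a \<le> b" "b \<le> c"
  shows "factor (y (a, c)) (\<lambda>i. b i - a i) = (y (a, b), y (b, c))"
  using factor_cmp[OF inf_path_mor[OF assms(1)] inf_path_mor[OF assms(2)]]
    inf_path_src[OF assms(1)] inf_path_rng[OF assms(2)] inf_path_cmp[OF assms]
    inf_path_deg[OF assms(1)]
  by simp

lemma factor_inf_path_origin:
  "b \<le> c \<Longrightarrow> factor (y (\<lambda>_. 0, c)) b = (y (\<lambda>_. 0, b), y (b, c))"
  using factor_inf_path[of "\<lambda>_. 0" b c] by (simp add: le_fun_def)

lemma is_prefix_inf_path: "b \<le> c \<Longrightarrow> is_prefix (y (\<lambda>_. 0, b)) (y (\<lambda>_. 0, c))"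
  using factor_inf_path_origin[of b c] inf_path_mor[of "\<lambda>_. 0" c] inf_path_deg[of "\<lambda>_. 0"]
  by (simp add: is_prefix_def le_fun_def)

end

lemma inf_paths_agree_below:
  assumes y: "is_inf_path G y" and y': "is_inf_path G y'"
    and agree: "y (\<lambda>_. 0, N) = y' (\<lambda>_. 0, N)" and "a \<le> b" "b \<le> N"
  shows "y (a, b) = y' (a, b)"
proof -
  have "a \<le> N"
    using assms order_trans by blast
  then have "y (a, N) = y' (a, N)"
    using factor_inf_path_origin[OF y] factor_inf_path_origin[OF y'] agree by (metis snd_conv)
  then show ?thesis
    using factor_inf_path[OF y assms(4,5)] factor_inf_path[OF y' assms(4,5)] by (metis fst_conv)
qed

text \<open>An infinite path is determined by its initial segments x(0, n); conversely every family
  of finite paths f n of degree n that are prefixes of one another is of this form.\<close>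

definition path_of :: "(('k \<Rightarrow> nat) \<Rightarrow> 'a) \<Rightarrow> ('k \<Rightarrow> nat) \<times> ('k \<Rightarrow> nat) \<Rightarrow> 'a" where
  "path_of f = (\<lambda>(m, n). if m \<le> n then snd (factor (f n) m) else undefined)"

context
  fixes f :: "('k \<Rightarrow> nat) \<Rightarrow> 'a"
  assumes deg_f: "\<And>n. deg G (f n) = n"
    and prefix_f: "\<And>m n. m \<le> n \<Longrightarrow> is_prefix (f m) (f n)"
begin

lemma path_of_origin: "path_of f (\<lambda>_. 0, n) = f n"
  using factor_zero[of "f n"] prefix_f[of n n] by (simp add: path_of_def le_fun_def is_prefix_def)

lemma is_inf_path_path_of: "is_inf_path G (path_of f)"
  unfolding is_inf_path_def
proof (intro conjI allI impI)
  have f_mor: "f n \<in> mor G" for n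
    using prefix_f[of n n] by (simp add: is_prefix_def)
  have F: "snd (factor (f n) m) \<in> mor G" "deg G (snd (factor (f n) m)) = (\<lambda>i. n i - m i)"
    "src G (f m) = rng G (snd (factor (f n) m))" "cmp G (f m) (snd (factor (f n) m)) = f n"
    if "m \<le> n" for m n
    using factor[OF f_mor, of m n] prefix_f[OF that] deg_f that by (simp_all add: is_prefix_def)
  have diag: "path_of f (m, m) = src G (f m)" for m
    using factor_deg[OF f_mor, of m] deg_f by (simp add: path_of_def)
  have src_F: "src G (snd (factor (f n) m)) = src G (f n)" if "m \<le> n" for m n
    using F[OF that] src_cmp[OF f_mor F(1)[OF that] F(3)[OF that]] by simp
  fix m n :: "'k \<Rightarrow> nat"
  {
    assume mn: "m \<le> n"
    show "path_of f (m, n) \<in> mor G" "deg G (path_of f (m, n)) = (\<lambda>i. n i - m i)"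
      "rng G (path_of f (m, n)) = path_of f (m, m)" "src G (path_of f (m, n)) = path_of f (n, n)"
      using F[OF mn] src_F[OF mn] diag mn by (auto simp: path_of_def)
    fix p :: "'k \<Rightarrow> nat"
    assume np: "n \<le> p"
    then have mp: "m \<le> p"
      using mn order_trans by blast
    define s1 s2 s3 where "s1 = snd (factor (f n) m)" and "s2 = snd (factor (f p) n)"
      and "s3 = snd (factor (f p) m)"
    have s12: "src G s1 = rng G s2"
      using src_F[OF mn] F(3)[OF np] s1_def s2_def by simp
    have "cmp G (f m) (cmp G s1 s2) = f p"
      using F[OF mn] F[OF np] cmp_assoc[OF f_mor F(1)[OF mn] F(3)[OF mn] F(1)[OF np]] s12
      by (simp add: s1_def s2_def)
    moreover have "src G (f m) = rng G (cmp G s1 s2)"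
      using rng_cmp[OF F(1)[OF mn] F(1)[OF np]] s12 F(3)[OF mn] by (simp add: s1_def s2_def)
    ultimately have "s3 = cmp G s1 s2"
      using cmp_eq_imp_factors_eq(2)[OF f_mor F(1)[OF mp] f_mor
          cmp_in_mor[OF F(1)[OF mn] F(1)[OF np]]]
        F[OF mp] s12 s1_def s2_def s3_def
      by simp
    then show "cmp G (path_of f (m, n)) (path_of f (n, p)) = path_of f (m, p)"
      using mn np mp by (simp add: path_of_def s1_def s2_def s3_def)
  }
  assume "\<not> m \<le> n"
  then show "path_of f (m, n) = undefined"
    by (simp add: path_of_def)
qed

end

lemma prepend_inf_path:
  assumes \<alpha>: "\<alpha> \<in> mor G" and x: "is_inf_path G x" and \<alpha>x: "src G \<alpha> = x (\<lambda>_. 0, \<lambda>_. 0)"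
  obtains y where "is_inf_path G y" "shift (deg G \<alpha>) y = x" "y (\<lambda>_. 0, deg G \<alpha>) = \<alpha>"
proof -
  define z :: "'k \<Rightarrow> nat" where "z = (\<lambda>_. 0)"
  define D where "D = deg G \<alpha>"
  define g where "g n = cmp G \<alpha> (x (z, n))" for n
  define f where "f n = fst (factor (g n) n)" for n
  have z_le: "z \<le> n" for n
    by (simp add: z_def le_fun_def)
  have x0: "x (z, n) \<in> mor G" "src G \<alpha> = rng G (x (z, n))" for n
    using inf_path_mor[OF x z_le] inf_path_rng[OF x z_le] \<alpha>x by (simp_all add: z_def)
  have g: "g n \<in> mor G" "deg G (g n) = (\<lambda>i. D i + n i)" for n
    using cmp_in_mor[OF \<alpha> x0] deg_cmp[OF \<alpha> x0] inf_path_deg[OF x z_le]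
    by (simp_all add: g_def D_def z_def)
  have g_step: "g n = cmp G (g m) (x (m, n))" "src G (g m) = rng G (x (m, n))" if "m \<le> n" for m n
    using cmp_assoc[OF \<alpha> x0 inf_path_mor[OF x that]] src_cmp[OF \<alpha> x0]
      inf_path_cmp[OF x z_le that] inf_path_src[OF x z_le] inf_path_rng[OF x that]
    by (simp_all add: g_def)
  have g_prefix: "is_prefix (g m) (g n)" if "m \<le> n" for m n
    using is_prefix_cmp[OF g(1) inf_path_mor[OF x that] g_step(2)[OF that]] g_step(1)[OF that]
    by simp
  have g_long: "n \<le> deg G (g n)" for n
    using g(2) by (simp add: le_fun_def)
  have deg_f: "deg G (f n) = n" for n
    using prefix_chain_factors(1)[OF g_prefix g_long] by (simp add: f_def)
  have f_prefix: "is_prefix (f m) (f n)" if "m \<le> n" for m n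
    using prefix_chain_factors(2)[OF g_prefix g_long that] by (simp add: f_def)
  have f_shifted: "f (\<lambda>i. D i + n i) = g n" for n
  proof -
    have "is_prefix (g n) (g (\<lambda>i. D i + n i))"
      by (rule g_prefix) (simp add: le_fun_def)
    then show ?thesis
      using g(2) by (simp add: f_def is_prefix_def)
  qed
  define y where "y = path_of f"
  have y: "is_inf_path G y"
    using is_inf_path_path_of[OF deg_f f_prefix] by (simp add: y_def)
  have "y (\<lambda>i. D i + p i, \<lambda>i. D i + q i) = x (p, q)" for p q
  proof (cases "p \<le> q")
    case True
    have "factor (g q) (deg G (g p)) = (g p, x (p, q))"
      using factor_cmp[OF g(1) inf_path_mor[OF x True] g_step(2)[OF True]] g_step(1)[OF True]
      by simp
    then show ?thesis
      using True f_shifted g(2) by (simp add: y_def path_of_def le_fun_def)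
  next
    case False
    then show ?thesis
      using inf_path_undefined[OF x] inf_path_undefined[OF y] by (simp add: le_fun_def)
  qed
  then have "shift D y = x"
    by (auto simp: shift_def fun_eq_iff)
  moreover have "y (z, D) = \<alpha>"
  proof -
    have "y (z, D) = f D"
      using path_of_origin[OF deg_f f_prefix, of D] by (simp add: y_def z_def)
    also have "\<dots> = \<alpha>"
      using factor_cmp[OF \<alpha> x0] by (simp add: f_def g_def D_def)
    finally show ?thesis .
  qed
  ultimately show thesis
    using that y by (simp add: D_def z_def)
qed

definition separates :: "('k \<Rightarrow> nat) \<Rightarrow> ('k \<Rightarrow> nat) \<Rightarrow> 'a \<Rightarrow> bool" where
  "separates m n l \<longleftrightarrow>
     (\<forall>y. is_inf_path G y \<and> y (\<lambda>_. 0, deg G l) = l \<longrightarrow> shift m y \<noteq> shift n y)"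

lemma shift_ne_forced_by_prefix:
  assumes y: "is_inf_path G y" and "shift m y \<noteq> shift n y"
  obtains N0 where "\<And>N. N0 \<le> N \<Longrightarrow> separates m n (y (\<lambda>_. 0, N))"
proof -
  obtain pq where "shift m y pq \<noteq> shift n y pq"
    using assms(2) by (auto simp: fun_eq_iff)
  then obtain p q where pq: "y (\<lambda>i. m i + p i, \<lambda>i. m i + q i) \<noteq> y (\<lambda>i. n i + p i, \<lambda>i. n i + q i)"
    by (cases pq) (simp add: shift_apply)
  have "p \<le> q"
  proof (rule ccontr)
    assume "\<not> p \<le> q"
    then have "\<not> (\<lambda>i. d i + p i) \<le> (\<lambda>i. d i + q i)" for d :: "'k \<Rightarrow> nat"
      by (simp add: le_fun_def)
    then show False
      using pq inf_path_undefined[OF y] by simp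
  qed
  define N0 where "N0 = (\<lambda>i. m i + n i + q i)"
  have "separates m n (y (\<lambda>_. 0, N))" if "N0 \<le> N" for N
    unfolding separates_def
  proof (intro allI impI)
    fix y' assume y': "is_inf_path G y' \<and> y' (\<lambda>_. 0, deg G (y (\<lambda>_. 0, N))) = y (\<lambda>_. 0, N)"
    then have agree: "y (\<lambda>_. 0, N) = y' (\<lambda>_. 0, N)"
      using inf_path_deg[OF y, of "\<lambda>_. 0" N] by (simp add: le_fun_def)
    have "y (\<lambda>i. d i + p i, \<lambda>i. d i + q i) = y' (\<lambda>i. d i + p i, \<lambda>i. d i + q i)"
      if "d \<le> (\<lambda>i. m i + n i)" for d
    proof (rule inf_paths_agree_below[OF y conjunct1[OF y'] agree])
      show "(\<lambda>i. d i + p i) \<le> (\<lambda>i. d i + q i)"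
        using \<open>p \<le> q\<close> by (simp add: le_fun_def)
      show "(\<lambda>i. d i + q i) \<le> N"
        using le_funD[OF that] le_funD[OF \<open>N0 \<le> N\<close>]
        by (simp add: le_fun_def N0_def) (meson add_le_mono1 order_trans)
    qed
    from this[of m] this[of n] pq have "shift m y' (p, q) \<noteq> shift n y' (p, q)"
      by (simp add: le_fun_def shift_apply)
    then show "shift m y' \<noteq> shift n y'"
      by auto
  qed
  then show thesis
    using that by blast
qed

lemma separating_extension:
  assumes "strongly_connected G" and "Per G = {(\<lambda>_. 0)}"
    and l: "l \<in> mor G" and "m \<noteq> n"
  obtains l' where "is_prefix l l'" "c \<le> deg G l'" "separates m n l'"
proof -
  define z :: "'k \<Rightarrow> nat" where "z = (\<lambda>_. 0)"
  obtain x where x: "is_inf_path G x" "shift m x \<noteq> shift n x"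
    using Per_trivial_imp_shift_ne[OF assms(2,4)] .
  have "x (z, z) \<in> vertices G"
    using inf_path_mor[OF x(1)] inf_path_rng[OF x(1)] inf_path_src[OF x(1)]
    by (simp add: vertices_def)
  then obtain \<mu> where \<mu>: "\<mu> \<in> mor G" "src G l = rng G \<mu>" "src G \<mu> = x (z, z)"
    using assms(1) src_in_vertices[OF l] unfolding strongly_connected_def by metis
  define \<alpha> where "\<alpha> = cmp G l \<mu>"
  have \<alpha>: "\<alpha> \<in> mor G" "src G \<alpha> = x (z, z)" "is_prefix l \<alpha>"
    using cmp_in_mor[OF l \<mu>(1,2)] src_cmp[OF l \<mu>(1,2)] is_prefix_cmp[OF l \<mu>(1,2)] \<mu>(3)
    by (simp_all add: \<alpha>_def)
  obtain y where y: "is_inf_path G y" "shift (deg G \<alpha>) y = x" "y (z, deg G \<alpha>) = \<alpha>"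
    using prepend_inf_path[OF \<alpha>(1) x(1)] \<alpha>(2) by (auto simp: z_def)
  have "shift m y \<noteq> shift n y"
    using x(2) y(2) shift_ne_if_shift_ne_shift by blast
  then obtain N0 where N0: "\<And>N. N0 \<le> N \<Longrightarrow> separates m n (y (z, N))"
    using shift_ne_forced_by_prefix[OF y(1)] by (auto simp: z_def)
  define N where "N = (\<lambda>i. N0 i + c i + deg G \<alpha> i)"
  have "is_prefix l (y (z, N))"
    using is_prefix_trans[OF \<alpha>(3)] is_prefix_inf_path[OF y(1), of "deg G \<alpha>" N] y(3)
    by (simp add: N_def z_def le_fun_def)
  moreover have "c \<le> deg G (y (z, N))"
    using inf_path_deg[OF y(1), of z N] by (simp add: N_def z_def le_fun_def)
  ultimately show thesis
    using that N0 by (simp add: N_def le_fun_def)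
qed

lemma inf_path_through_prefix_chain:
  assumes chain: "\<And>j. is_prefix (s j) (s (Suc j))" and s0: "s 0 \<in> mor G"
    and unbounded: "\<And>j. (\<lambda>_. j) \<le> deg G (s j)"
  obtains x where "is_inf_path G x" "\<And>j. x (\<lambda>_. 0, deg G (s j)) = s j"
proof -
  have s_prefix: "is_prefix (s i) (s j)" if "i \<le> j" for i j
    using that
  proof (induction j rule: dec_induct)
    case base
    show ?case
      using is_prefix_refl s0 chain by (cases i) (auto simp: is_prefix_def)
  next
    case (step j)
    then show ?case
      using is_prefix_trans chain by blast
  qed
  \<comment> \<open>J n dominates every component of n, so s (J n) has a prefix of degree n.\<close>
  define J where "J n = (\<Sum>i\<in>UNIV. n i)" for n :: "'k \<Rightarrow> nat"
  have J_mono: "J m \<le> J n" if "m \<le> n" for m n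
    using that by (simp add: J_def le_fun_def sum_mono)
  have le_deg_s_J: "n \<le> deg G (s (J n))" for n
    using unbounded[of "J n"] member_le_sum[of _ UNIV n]
    by (fastforce simp: J_def le_fun_def intro: order_trans)
  define f where "f n = fst (factor (s (J n)) n)" for n
  have deg_f: "deg G (f n) = n" for n
    using prefix_chain_factors(1)[OF s_prefix[OF J_mono] le_deg_s_J] by (simp add: f_def)
  have f_prefix: "is_prefix (f m) (f n)" if "m \<le> n" for m n
    using prefix_chain_factors(2)[OF s_prefix[OF J_mono] le_deg_s_J that] by (simp add: f_def)
  show thesis
  proof (rule that[of "path_of f"])
    show "is_inf_path G (path_of f)"
      by (rule is_inf_path_path_of[OF deg_f f_prefix])
    fix j
    have "j \<le> J (deg G (s j))"
      using unbounded[of j] member_le_sum[of undefined UNIV "deg G (s j)"]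
      by (auto simp: J_def le_fun_def intro: order_trans)
    then have "f (deg G (s j)) = s j"
      using s_prefix by (simp add: f_def is_prefix_def)
    then show "path_of f (\<lambda>_. 0, deg G (s j)) = s j"
      using path_of_origin[OF deg_f f_prefix] by simp
  qed
qed

context
  assumes strongly_connected: "strongly_connected G" and Per_trivial: "Per G = {(\<lambda>_. 0)}"
begin

lemma separating_chain:
  assumes v: "v \<in> vertices G"
  obtains s where "s 0 = v" "\<And>j. is_prefix (s j) (s (Suc j))" "\<And>j. (\<lambda>_. j) \<le> deg G (s j)"
    "\<And>m n. m \<noteq> n \<Longrightarrow> \<exists>j. separates m n (s j)"
proof -
  let ?pair = "from_nat :: nat \<Rightarrow> ('k \<Rightarrow> nat) \<times> ('k \<Rightarrow> nat)"
  have "\<exists>l'. is_prefix l l' \<and> (\<lambda>_. Suc j) \<le> deg G l'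
      \<and> (fst (?pair j) \<noteq> snd (?pair j) \<longrightarrow> separates (fst (?pair j)) (snd (?pair j)) l')"
    if l: "l \<in> mor G" for l j
  proof (cases "fst (?pair j) = snd (?pair j)")
    case True
    \<comment> \<open>Nothing to separate, but the extension is still needed to make degrees grow.\<close>
    have "(\<lambda>_. 0) \<noteq> (\<lambda>_. 1 :: nat)"
      by (simp add: fun_eq_iff)
    with True show ?thesis
      using separating_extension[OF strongly_connected Per_trivial l] by metis
  next
    case False
    then show ?thesis
      using separating_extension[OF strongly_connected Per_trivial l] by metis
  qed
  then obtain extend where extend: "\<And>l j. l \<in> mor G \<Longrightarrow> is_prefix l (extend l j)"
    "\<And>l j. l \<in> mor G \<Longrightarrow> (\<lambda>_. Suc j) \<le> deg G (extend l j)"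
    "\<And>l j. l \<in> mor G \<Longrightarrow> fst (?pair j) \<noteq> snd (?pair j) \<Longrightarrow>
       separates (fst (?pair j)) (snd (?pair j)) (extend l j)"
    by metis
  define s where "s = rec_nat v (\<lambda>j l. extend l j)"
  have s_Suc: "s (Suc j) = extend (s j) j" for j
    by (simp add: s_def)
  have s_mor: "s j \<in> mor G" for j
    by (induction j) (use v vertex_in_mor extend(1) in \<open>auto simp: s_def is_prefix_def\<close>)
  show thesis
  proof (rule that)
    show "s 0 = v"
      by (simp add: s_def)
    show "is_prefix (s j) (s (Suc j))" for j
      using extend(1)[OF s_mor] s_Suc by simp
    show "(\<lambda>_. j) \<le> deg G (s j)" for j
      using extend(2)[OF s_mor] s_Suc by (cases j) (simp_all add: le_fun_def)
    show "\<exists>j. separates m n (s j)" if "m \<noteq> n" for m n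
      using extend(3)[OF s_mor, of "to_nat (m, n)" "to_nat (m, n)"] s_Suc[of "to_nat (m, n)"] that
      by (metis from_nat_to_nat fst_conv snd_conv)
  qed
qed

lemma aperiodic_if_Per_trivial: "aperiodic G"
  unfolding aperiodic_def
proof
  fix v assume v: "v \<in> vertices G"
  obtain s where s: "s 0 = v" "\<And>j. is_prefix (s j) (s (Suc j))" "\<And>j. (\<lambda>_. j) \<le> deg G (s j)"
    and separating: "\<And>m n. m \<noteq> n \<Longrightarrow> \<exists>j. separates m n (s j)"
    using separating_chain[OF v] by blast
  obtain x where x: "is_inf_path G x" and x_s: "\<And>j. x (\<lambda>_. 0, deg G (s j)) = s j"
    using inf_path_through_prefix_chain[OF s(2) _ s(3)] s(1) v vertex_in_mor by metis
  have "x \<in> cyl G v"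
    using x x_s[of 0] s(1) deg_vertex[OF v] by (simp add: cyl_def inf_paths_def)
  moreover have "shift m x \<noteq> shift n x" if "m \<noteq> n" for m n
    using separating[OF that] x x_s unfolding separates_def by blast
  ultimately show "\<exists>x\<in>cyl G v. \<forall>m n. m \<noteq> n \<longrightarrow> shift m x \<noteq> shift n x"
    by blast
qed

end

end

theorem proposition5p4:
  fixes G :: "('a, 'k::finite) kgraph"
  assumes "k_graph G"
    and "edges_nonempty G"
    and "finite_kgraph G"
    and "strongly_connected G"
  shows "aperiodic G \<longleftrightarrow> Per G = {(\<lambda>_. 0)}"
proof -
  interpret higher_rank_graph G
    using assms(1) by unfold_locales
  have "vertices G \<noteq> {}"
    using assms(2) rng_in_vertices unfolding edges_nonempty_def by blast
  then show ?thesis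
    using Per_trivial_if_aperiodic aperiodic_if_Per_trivial[OF assms(4)] by blast
qed

end
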